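(* Fix $s,\mu>0$ and let $f_{s,\mu}$ be the repressilator vector field $\dot x=\frac{\mu}{1+y^s}-x$, $\dot y=\frac{\mu}{1+z^s}-y$, $\dot z=\frac{\mu}{1+x^s}-z$ on the closed positive orthant $\mathbb{R}^3_+=\{x,y,z\ge0\}$. Then $d\theta(f_{s,\mu})>0$ on $\mathbb{R}^3_+\setminus\Delta$.
   Context: $\Delta:=\mathrm{span}\{(1,1,1)\}\subset\mathbb{R}^3$ is the diagonal. For $\mathbf{x}=(x,y,z)$, $\mathbf{x}_\perp$ denotes the orthogonal projection of $\mathbf{x}$ onto $\Delta^\perp$, so $\|\mathbf{x}_\perp\|^2=\tfrac23(x^2+y^2+z^2-xy-yz-zx)$. The closed 1-form $d\theta$ on $\mathbb{R}^3\setminus\Delta$ is $$d\theta:=\frac{1}{\sqrt3}\,\frac{(z-y)\,dx+(x-z)\,dy+(y-x)\,dz}{\|\mathbf{x}_\perp\|^2}.$$ *)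

theory Defs
  imports "HOL-Analysis.Analysis"
begin

definition diag :: "(real \<times> real \<times> real) set" where
  "diag = {(t, t, t) | t. True}"

definition pos_orthant :: "(real \<times> real \<times> real) set" where
  "pos_orthant = {(x, y, z). x \<ge> 0 \<and> y \<ge> 0 \<and> z \<ge> 0}"

definition perp_norm2 :: "real \<times> real \<times> real \<Rightarrow> real" where
  "perp_norm2 p = (case p of (x, y, z) \<Rightarrow>
     norm ((x, y, z) - ((x + y + z) / 3) *\<^sub>R (1, 1, 1)) ^ 2)"

definition dtheta :: "real \<times> real \<times> real \<Rightarrow> real \<times> real \<times> real \<Rightarrow> real" where
  "dtheta p v = (case p of (x, y, z) \<Rightarrow> case v of (u, v, w) \<Rightarrow>
     (1 / sqrt 3) * ((z - y) * u + (x - z) * v + (y - x) * w) / perp_norm2 (x, y, z))"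

definition repressilator :: "real \<Rightarrow> real \<Rightarrow> real \<times> real \<times> real \<Rightarrow> real \<times> real \<times> real" where
  "repressilator s \<mu> p = (case p of (x, y, z) \<Rightarrow>
     (\<mu> / (1 + y powr s) - x, \<mu> / (1 + z powr s) - y, \<mu> / (1 + x powr s) - z))"

end

theory Submission
  imports Defs
begin

text \<open>Along the repressilator field the numerator of d\<theta> equals
  (z - y) g(y) + (x - z) g(z) + (y - x) g(x) with g t = \<mu> / (1 + t^s): the linear parts
  -x, -y, -z contribute (z - y) x + (x - z) y + (y - x) z = 0. This cyclic sum is invariant under
  rotating (x, y, z), so one may assume x is the smallest coordinate, and then it splits into
  two products of a nonnegative coordinate difference with a nonnegative difference of values of
  the decreasing function g, at least one of them strictly positive off the diagonal.\<close>

lemma cyclic_sum_pos_of_le: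
  fixes g :: "real \<Rightarrow> real"
  assumes g: "strict_antimono_on A g" and A: "x \<in> A" "y \<in> A" "z \<in> A"
    and "x \<le> y" "x \<le> z" and not_diag: "\<not> (x = y \<and> y = z)"
  shows "(z - y) * g y + (x - z) * g z + (y - x) * g x > 0"
proof -
  have antitone: "g d \<le> g c" if "c \<in> A" "d \<in> A" "c \<le> d" for c d
    using monotone_onD[OF g that(1,2)] that(3) by (cases "c = d") auto
  have nonneg: "0 \<le> (u - v) * (g c - g d)" if "v \<le> u" "c \<in> A" "d \<in> A" "c \<le> d" for u v c d
    using antitone[OF that(2-4)] that(1) by simp
  have pos: "0 < (u - v) * (g c - g d)" if "v < u" "c \<in> A" "d \<in> A" "c < d" for u v c d
    using monotone_onD[OF g that(2-4)] that(1) by simp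
  consider "y \<le> z" | "z \<le> y" by linarith
  then show ?thesis
  proof cases
    case 1
    have "(z - y) * g y + (x - z) * g z + (y - x) * g x
        = (z - y) * (g y - g z) + (y - x) * (g x - g z)"
      by algebra
    moreover have "0 \<le> (z - y) * (g y - g z)" "0 \<le> (y - x) * (g x - g z)"
      using 1 \<open>x \<le> y\<close> A by (auto intro!: nonneg)
    moreover have "0 < (z - y) * (g y - g z) \<or> 0 < (y - x) * (g x - g z)"
      using 1 \<open>x \<le> y\<close> not_diag A by (cases "x = y") (auto intro: pos)
    ultimately show ?thesis by linarith
  next
    case 2
    have "(z - y) * g y + (x - z) * g z + (y - x) * g x
        = (y - z) * (g x - g y) + (z - x) * (g x - g z)"
      by algebra
    moreover have "0 \<le> (y - z) * (g x - g y)" "0 \<le> (z - x) * (g x - g z)"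
      using 2 \<open>x \<le> z\<close> A by (auto intro!: nonneg)
    moreover have "0 < (y - z) * (g x - g y) \<or> 0 < (z - x) * (g x - g z)"
      using 2 \<open>x \<le> z\<close> not_diag A by (cases "x = z") (auto intro: pos)
    ultimately show ?thesis by linarith
  qed
qed

lemma cyclic_sum_pos:
  fixes g :: "real \<Rightarrow> real"
  assumes "strict_antimono_on A g" "x \<in> A" "y \<in> A" "z \<in> A" "\<not> (x = y \<and> y = z)"
  shows "(z - y) * g y + (x - z) * g z + (y - x) * g x > 0"
proof -
  consider "x \<le> y" "x \<le> z" | "y \<le> z" "y \<le> x" | "z \<le> x" "z \<le> y" by linarith
  then show ?thesis
  proof cases
    case 1
    then show ?thesis using cyclic_sum_pos_of_le assms by blast
  next
    case 2
    then have "(x - z) * g z + (y - x) * g x + (z - y) * g y > 0"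
      using cyclic_sum_pos_of_le[of A g y z x] assms by blast
    then show ?thesis by linarith
  next
    case 3
    then have "(y - x) * g x + (z - y) * g y + (x - z) * g z > 0"
      using cyclic_sum_pos_of_le[of A g z x y] assms by blast
    then show ?thesis by linarith
  qed
qed

lemma strict_antimono_on_hill:
  fixes s \<mu> :: real
  assumes "s > 0" "\<mu> > 0"
  shows "strict_antimono_on {0..} (\<lambda>t. \<mu> / (1 + t powr s))"
proof (rule monotone_onI)
  fix u v :: real
  assume "u \<in> {0..}" "u < v"
  then have "u powr s < v powr s" using powr_less_mono2[OF \<open>s > 0\<close>] by simp
  moreover have "0 < 1 + u powr s" by (simp add: add_pos_nonneg)
  ultimately show "\<mu> / (1 + v powr s) < \<mu> / (1 + u powr s)"
    using \<open>\<mu> > 0\<close> by (intro divide_strict_left_mono) (auto intro: mult_pos_pos)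
qed

lemma perp_norm2_pos:
  assumes "\<not> (x = y \<and> y = z)"
  shows "perp_norm2 (x, y, z) > 0"
proof -
  have "(x, y, z) - ((x + y + z) / 3) *\<^sub>R (1::real, 1::real, 1::real) \<noteq> 0"
    using assms by (auto simp: zero_prod_def)
  then show ?thesis unfolding perp_norm2_def by simp
qed

lemma dtheta_repressilator:
  "dtheta (x, y, z) (repressilator s \<mu> (x, y, z))
    = (1 / sqrt 3) * ((z - y) * g y + (x - z) * g z + (y - x) * g x) / perp_norm2 (x, y, z)"
  if "g = (\<lambda>t. \<mu> / (1 + t powr s))"
proof -
  have "(z - y) * (g y - x) + (x - z) * (g z - y) + (y - x) * (g x - z)
      = (z - y) * g y + (x - z) * g z + (y - x) * g x"
    by algebra
  then show ?thesis unfolding dtheta_def repressilator_def that by simp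
qed

theorem lemma7:
  fixes s \<mu> :: real
  assumes "s > 0" and "\<mu> > 0"
  shows "\<forall>p \<in> pos_orthant - diag. dtheta p (repressilator s \<mu> p) > 0"
proof
  fix p assume "p \<in> pos_orthant - diag"
  then obtain x y z where p: "p = (x, y, z)" and nonneg: "x \<in> {0..}" "y \<in> {0..}" "z \<in> {0..}"
    and not_diag: "\<not> (x = y \<and> y = z)"
    by (cases p) (auto simp: pos_orthant_def diag_def)
  define g where "g = (\<lambda>t. \<mu> / (1 + t powr s))"
  have "(z - y) * g y + (x - z) * g z + (y - x) * g x > 0"
    using cyclic_sum_pos[OF _ nonneg not_diag] strict_antimono_on_hill[OF assms]
    unfolding g_def by blast
  then show "dtheta p (repressilator s \<mu> p) > 0"
    unfolding p dtheta_repressilator[OF g_def] using perp_norm2_pos[OF not_diag] by simp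
qed

end
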